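(* Let $\mathcal{A}\subseteq\mathbb{R}^3$ be measurable with finite positive measure, $k_0,\eta>0$, and for $k\in\{1,2\}$ let $\mathsf{G}_k\in L^2(\mathcal{A})$ with $\mathsf{g}_k=\int_{\mathcal{A}}|\mathsf{G}_k|^2>0$, $\mathsf{H}_k=\frac{\mathrm{j}k_0\eta}{\sqrt{4\pi}}\mathsf{G}_k$, $A_{\mathsf{u},k}>0$, $\sigma_k>0$, $\hat{\mathsf{H}}_k=\frac{\sqrt{A_{\mathsf{u},k}}}{\sigma_k}\mathsf{H}_k$, and let $\rho=\frac{\int_{\mathcal{A}}\mathsf{G}_1^*\mathsf{G}_2}{\sqrt{\mathsf{g}_1\mathsf{g}_2}}$. Let $\mathsf{P}>0$ and let $\mathsf{J}_{\mathsf{dl},1},\mathsf{J}_{\mathsf{dl},2}\in L^2(\mathcal{A})$ satisfy $\sum_{k=1}^2\int_{\mathcal{A}}|\mathsf{J}_{\mathsf{dl},k}|^2\le\mathsf{P}$. Define $$\mathsf{P}_2=\frac{|\int_{\mathcal{A}}\hat{\mathsf{H}}_2\mathsf{J}_{\mathsf{dl},2}|^2}{\int_{\mathcal{A}}|\hat{\mathsf{H}}_2|^2\,\big(1+|\int_{\mathcal{A}}\hat{\mathsf{H}}_2\mathsf{J}_{\mathsf{dl},1}|^2\big)},\qquad \mathsf{P}_1=\frac{|\int_{\mathcal{A}}\hat{\mathsf{H}}_1\mathsf{J}_{\mathsf{dl},1}|^2}{\int_{\mathcal{A}}|\hat{\mathsf{H}}_1|^2-\frac{\mathsf{P}_2|\int_{\mathcal{A}}\hat{\mathsf{H}}_1^*\hat{\mathsf{H}}_2|^2}{1+\mathsf{P}_2\int_{\mathcal{A}}|\hat{\mathsf{H}}_2|^2}},$$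 and $\overline{\gamma}_{k}=\frac{A_{\mathsf{u},k}k_0^2\eta^2}{4\pi\sigma_k^2}\mathsf{P}_k$. Then the dual uplink sum-rate with this power allocation (SIC order $1\rightarrow2$), $$\log_2\!\Big(1+\overline{\gamma}_1\mathsf{g}_1\Big(1-\tfrac{\overline{\gamma}_2\mathsf{g}_2|\rho|^2}{1+\overline{\gamma}_2\mathsf{g}_2}\Big)\Big)+\log_2(1+\overline{\gamma}_2\mathsf{g}_2),$$ equals the downlink sum-rate under dirty-paper coding with order $2\rightarrow1$, $$\log_2\Big(1+\Big|\int_{\mathcal{A}}\hat{\mathsf{H}}_1\mathsf{J}_{\mathsf{dl},1}\Big|^2\Big)+\log_2\Big(1+\frac{|\int_{\mathcal{A}}\hat{\mathsf{H}}_2\mathsf{J}_{\mathsf{dl},2}|^2}{1+|\int_{\mathcal{A}}\hat{\mathsf{H}}_2\mathsf{J}_{\mathsf{dl},1}|^2}\Big),$$ and $\mathsf{P}_1+\mathsf{P}_2\le\sum_{k=1}^2\int_{\mathcal{A}}|\mathsf{J}_{\mathsf{dl},k}|^2\le\mathsf{P}$.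
   Context: Integrals without variable are over $\mathbf{r}\in\mathcal{A}$. In the paper $\mathcal{A}$ is the base-station continuous aperture, $\mathsf{G}_k(\mathbf{r})=\frac{e^{-\mathrm{j}k_0\|\mathbf{r}-\mathbf{s}_k\|}}{\sqrt{4\pi}\|\mathbf{r}-\mathbf{s}_k\|}\sqrt{\frac{|\mathbf{e}^{\mathsf{T}}(\mathbf{s}_k-\mathbf{r})|}{\|\mathbf{r}-\mathbf{s}_k\|}}$ (user locations $\mathbf{s}_k\notin\overline{\mathcal{A}}$, aperture normal $\mathbf{e}$), $\mathsf{J}_{\mathsf{dl},k}$ are downlink source current distributions, $A_{\mathsf{u},k}$ user apertures and $\sigma_k^2$ noise intensities. *)

theory Defs
  imports "HOL-Analysis.Analysis"
begin

definition aint :: "(real^3) set \<Rightarrow> (real^3 \<Rightarrow> complex) \<Rightarrow> complex" where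
  "aint A f = (LINT r:A|lborel. f r)"

definition L2_on :: "(real^3) set \<Rightarrow> (real^3 \<Rightarrow> complex) \<Rightarrow> bool" where
  "L2_on A f \<longleftrightarrow> (\<lambda>r. indicator A r *\<^sub>R f r) \<in> borel_measurable lborel
      \<and> set_integrable lborel A (\<lambda>r. (cmod (f r))^2)"

definition nrm2 :: "(real^3) set \<Rightarrow> (real^3 \<Rightarrow> complex) \<Rightarrow> real" where
  "nrm2 A f = (LINT r:A|lborel. (cmod (f r))^2)"

end

theory Submission
  imports Defs
begin

text \<open>Write <u, w> for the integral of u times the conjugate of w over the aperture, so that the
downlink integrals are <Hh k, conj J l>. With Q = I + P2 Hh2 Hh2^*, the uplink SINR of user 1,
decoded first with user 2 as interference, is P1 <Hh1, Q^-1 Hh1>, and by Sherman-Morrison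
<Hh1, Q^-1 Hh1> = |Hh1|^2 - P2 |<Hh1, Hh2>|^2 / (1 + P2 |Hh2|^2). The powers P1, P2 are chosen
so that each uplink SINR equals the corresponding downlink SINR, which gives the equality of the
sum rates term by term. For the power budget, Cauchy-Schwarz gives
P2 (1 + |<Hh2, conj J1>|^2) <= |J2|^2, and Cauchy-Schwarz for the inner product <., Q .> gives
|<Hh1, conj J1>|^2 <= <Hh1, Q^-1 Hh1> <conj J1, Q conj J1>, i.e.
P1 <= |J1|^2 + P2 |<Hh2, conj J1>|^2. Adding the two bounds yields P1 + P2 <= |J1|^2 + |J2|^2.\<close>

definition square_integrable :: "'a measure \<Rightarrow> ('a \<Rightarrow> complex) \<Rightarrow> bool" where
  "square_integrable M u \<longleftrightarrow> u \<in> borel_measurable M \<and> integrable M (\<lambda>x. (cmod (u x))\<^sup>2)"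

definition L2_inner :: "'a measure \<Rightarrow> ('a \<Rightarrow> complex) \<Rightarrow> ('a \<Rightarrow> complex) \<Rightarrow> complex" where
  "L2_inner M u w = (LINT x|M. u x * cnj (w x))"

definition L2_norm_sq :: "'a measure \<Rightarrow> ('a \<Rightarrow> complex) \<Rightarrow> real" where
  "L2_norm_sq M u = (LINT x|M. (cmod (u x))\<^sup>2)"

lemma borel_measurable_cnj [measurable]:
  "f \<in> borel_measurable M \<Longrightarrow> (\<lambda>x. cnj (f x)) \<in> borel_measurable M"
  by (rule borel_measurable_continuous_on[where f = cnj]) (auto intro: continuous_on_cnj)

lemma square_integrable_cnj: "square_integrable M u \<Longrightarrow> square_integrable M (\<lambda>x. cnj (u x))"
  unfolding square_integrable_def by (simp add: borel_measurable_cnj)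

lemma square_integrable_scale: "square_integrable M u \<Longrightarrow> square_integrable M (\<lambda>x. c * u x)"
  unfolding square_integrable_def by (simp add: norm_mult power_mult_distrib borel_measurable_times)

lemma square_integrable_add:
  assumes "square_integrable M u" and "square_integrable M w"
  shows "square_integrable M (\<lambda>x. u x + w x)"
proof -
  have [measurable]: "u \<in> borel_measurable M" "w \<in> borel_measurable M"
    using assms unfolding square_integrable_def by auto
  have "integrable M (\<lambda>x. 2 * (cmod (u x))\<^sup>2 + 2 * (cmod (w x))\<^sup>2)"
    using assms unfolding square_integrable_def by auto
  then have "integrable M (\<lambda>x. (cmod (u x + w x))\<^sup>2)"
  proof (rule Bochner_Integration.integrable_bound)
    show "AE x in M. norm ((cmod (u x + w x))\<^sup>2) \<le> norm (2 * (cmod (u x))\<^sup>2 + 2 * (cmod (w x))\<^sup>2)"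
    proof (rule AE_I2)
      fix x
      have "(cmod (u x + w x))\<^sup>2 \<le> (cmod (u x) + cmod (w x))\<^sup>2"
        by (simp add: norm_triangle_ineq power_mono)
      also have "\<dots> \<le> 2 * (cmod (u x))\<^sup>2 + 2 * (cmod (w x))\<^sup>2"
        using sum_squares_bound[of "cmod (u x)" "cmod (w x)"] by (simp add: power2_sum)
      finally show "norm ((cmod (u x + w x))\<^sup>2) \<le> norm (2 * (cmod (u x))\<^sup>2 + 2 * (cmod (w x))\<^sup>2)"
        by simp
    qed
  qed measurable
  then show ?thesis unfolding square_integrable_def by simp
qed

lemma integrable_mult_cnj:
  assumes "square_integrable M u" and "square_integrable M w"
  shows "integrable M (\<lambda>x. u x * cnj (w x))"
proof (rule Bochner_Integration.integrable_bound)
  show "integrable M (\<lambda>x. (cmod (u x))\<^sup>2 + (cmod (w x))\<^sup>2)"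
    using assms unfolding square_integrable_def by auto
  show "(\<lambda>x. u x * cnj (w x)) \<in> borel_measurable M"
    using assms unfolding square_integrable_def by (auto intro: borel_measurable_cnj)
  show "AE x in M. norm (u x * cnj (w x)) \<le> norm ((cmod (u x))\<^sup>2 + (cmod (w x))\<^sup>2)"
  proof (rule AE_I2)
    fix x
    have "cmod (u x) * cmod (w x) \<le> (cmod (u x))\<^sup>2 + (cmod (w x))\<^sup>2"
      using sum_squares_bound[of "cmod (u x)" "cmod (w x)"]
        mult_nonneg_nonneg[OF norm_ge_zero norm_ge_zero, of "u x" "w x"] by linarith
    then show "norm (u x * cnj (w x)) \<le> norm ((cmod (u x))\<^sup>2 + (cmod (w x))\<^sup>2)"
      by (simp add: norm_mult)
  qed
qed

lemma L2_inner_add_scaled_left: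
  assumes "square_integrable M u" "square_integrable M w" "square_integrable M e"
  shows "L2_inner M (\<lambda>x. u x + c * w x) e = L2_inner M u e + c * L2_inner M w e"
  using integrable_mult_cnj[OF assms(1,3)] integrable_mult_cnj[OF assms(2,3)]
  unfolding L2_inner_def by (simp add: distrib_right mult.assoc)

lemma L2_inner_commute: "L2_inner M w u = cnj (L2_inner M u w)"
  unfolding L2_inner_def by (subst Bochner_Integration.integral_cnj[symmetric]) (simp add: mult.commute)

lemma L2_inner_add_scaled_right:
  assumes "square_integrable M u" "square_integrable M w" "square_integrable M e"
  shows "L2_inner M e (\<lambda>x. u x + c * w x) = L2_inner M e u + cnj c * L2_inner M e w"
  by (subst (1 2 3) L2_inner_commute) (simp add: L2_inner_add_scaled_left[OF assms])

lemma cmod_L2_inner_commute: "cmod (L2_inner M w u) = cmod (L2_inner M u w)"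
  by (simp add: L2_inner_commute[of M w u])

lemma L2_inner_self: "L2_inner M u u = of_real (L2_norm_sq M u)"
  unfolding L2_inner_def L2_norm_sq_def by (simp only: complex_norm_square[symmetric] integral_complex_of_real)

lemma L2_norm_sq_nonneg: "0 \<le> L2_norm_sq M u"
  unfolding L2_norm_sq_def by simp

lemma L2_norm_sq_scale: "L2_norm_sq M (\<lambda>x. c * u x) = (cmod c)\<^sup>2 * L2_norm_sq M u"
  unfolding L2_norm_sq_def by (simp add: norm_mult power_mult_distrib)

lemma L2_norm_sq_cnj: "L2_norm_sq M (\<lambda>x. cnj (u x)) = L2_norm_sq M u"
  unfolding L2_norm_sq_def by simp

lemma L2_inner_Cauchy_Schwarz:
  assumes u: "square_integrable M u" and w: "square_integrable M w"
  shows "(cmod (L2_inner M u w))\<^sup>2 \<le> L2_norm_sq M u * L2_norm_sq M w"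
proof -
  have [measurable]: "u \<in> borel_measurable M" "w \<in> borel_measurable M"
    using assms unfolding square_integrable_def by auto
  have int_uw: "integrable M (\<lambda>x. cmod (u x) * cmod (w x))"
    using integrable_norm[OF integrable_mult_cnj[OF u w]] by (simp add: norm_mult)
  have "ennreal ((LINT x|M. cmod (u x) * cmod (w x))\<^sup>2)
      = (\<integral>\<^sup>+x. ennreal (cmod (u x)) * ennreal (cmod (w x)) \<partial>M)\<^sup>2"
    using int_uw by (simp add: nn_integral_eq_integral ennreal_mult[symmetric] ennreal_power)
  also have "\<dots> \<le> (\<integral>\<^sup>+x. (ennreal (cmod (u x)))\<^sup>2 \<partial>M) * (\<integral>\<^sup>+x. (ennreal (cmod (w x)))\<^sup>2 \<partial>M)"
    by (rule Cauchy_Schwarz_nn_integral) measurable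
  also have "\<dots> = ennreal (L2_norm_sq M u * L2_norm_sq M w)"
    using assms unfolding square_integrable_def L2_norm_sq_def
    by (simp add: ennreal_power nn_integral_eq_integral ennreal_mult)
  finally have "(LINT x|M. cmod (u x) * cmod (w x))\<^sup>2 \<le> L2_norm_sq M u * L2_norm_sq M w"
    by (simp add: ennreal_le_iff mult_nonneg_nonneg L2_norm_sq_nonneg)
  moreover have "cmod (L2_inner M u w) \<le> (LINT x|M. cmod (u x) * cmod (w x))"
    unfolding L2_inner_def using integral_norm_bound[of M "\<lambda>x. u x * cnj (w x)"]
    by (simp add: norm_mult)
  ultimately show ?thesis
    by (meson norm_ge_zero order_trans power_mono)
qed

lemma L2_inner_scale: "L2_inner M (\<lambda>x. a * u x) (\<lambda>x. b * w x) = a * cnj b * L2_inner M u w"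
  unfolding L2_inner_def by (simp add: ac_simps)

definition L2_corr_sq :: "'a measure \<Rightarrow> ('a \<Rightarrow> complex) \<Rightarrow> ('a \<Rightarrow> complex) \<Rightarrow> real" where
  "L2_corr_sq M u w = (cmod (L2_inner M u w))\<^sup>2 / (L2_norm_sq M u * L2_norm_sq M w)"

lemma L2_corr_sq_scale:
  assumes "a \<noteq> 0" "b \<noteq> 0"
  shows "L2_corr_sq M (\<lambda>x. a * u x) (\<lambda>x. b * w x) = L2_corr_sq M u w"
  unfolding L2_corr_sq_def L2_inner_scale L2_norm_sq_scale using assms
  by (simp add: norm_mult power_mult_distrib mult_ac)

lemma power2_add_weighted_le:
  fixes X V E t p q :: real
  assumes "0 \<le> X" "X\<^sup>2 \<le> V * E" "0 \<le> V" "0 \<le> E" "0 \<le> t" "0 \<le> p" "0 \<le> q"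
  shows "(X + t * p * q)\<^sup>2 \<le> (V + t * p\<^sup>2) * (E + t * q\<^sup>2)"
proof -
  have "X \<le> sqrt V * sqrt E"
    using assms(2) by (simp add: real_le_rsqrt flip: real_sqrt_mult)
  then have "X * (p * q) \<le> (sqrt V * sqrt E) * (p * q)"
    using assms by (intro mult_right_mono) auto
  then have "2 * X * p * q \<le> 2 * (sqrt V * q) * (sqrt E * p)"
    by (simp add: algebra_simps)
  also have "\<dots> \<le> (sqrt V * q)\<^sup>2 + (sqrt E * p)\<^sup>2"
    by (rule sum_squares_bound)
  also have "\<dots> = V * q\<^sup>2 + E * p\<^sup>2"
    using assms by (simp add: power_mult_distrib)
  finally have "t * (2 * X * p * q) \<le> t * (V * q\<^sup>2 + E * p\<^sup>2)"
    using assms(5) by (rule mult_left_mono)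
  with assms(2) show ?thesis
    by (simp add: power2_eq_square algebra_simps)
qed

text \<open>Cauchy-Schwarz for the inner product <v, (I + t g g^*) e>.\<close>

lemma L2_inner_rank_one_Cauchy_Schwarz:
  assumes v: "square_integrable M v" and e: "square_integrable M e"
    and g: "square_integrable M g" and t: "0 \<le> t"
  shows "(cmod (L2_inner M v e + of_real t * L2_inner M v g * L2_inner M g e))\<^sup>2
     \<le> (L2_norm_sq M v + t * (cmod (L2_inner M v g))\<^sup>2) * (L2_norm_sq M e + t * (cmod (L2_inner M g e))\<^sup>2)"
proof -
  have "cmod (L2_inner M v e + of_real t * L2_inner M v g * L2_inner M g e)
      \<le> cmod (L2_inner M v e) + t * cmod (L2_inner M v g) * cmod (L2_inner M g e)"
    using t by (intro order_trans[OF norm_triangle_ineq]) (simp add: norm_mult)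
  then have "(cmod (L2_inner M v e + of_real t * L2_inner M v g * L2_inner M g e))\<^sup>2
      \<le> (cmod (L2_inner M v e) + t * cmod (L2_inner M v g) * cmod (L2_inner M g e))\<^sup>2"
    by (simp add: power_mono)
  also have "\<dots> \<le> (L2_norm_sq M v + t * (cmod (L2_inner M v g))\<^sup>2) * (L2_norm_sq M e + t * (cmod (L2_inner M g e))\<^sup>2)"
    using L2_inner_Cauchy_Schwarz[OF v e] t
    by (intro power2_add_weighted_le) (simp_all add: L2_norm_sq_nonneg)
  finally show ?thesis .
qed

text \<open>The quadratic form <f, (I + t g g^*)^-1 f> in Sherman-Morrison form: the SINR per unit
power of a user with channel f under the MMSE receiver, when a user with channel g and power t
is still undecoded.\<close>

definition mmse_gain :: "'a measure \<Rightarrow> ('a \<Rightarrow> complex) \<Rightarrow> ('a \<Rightarrow> complex) \<Rightarrow> real \<Rightarrow> real" where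
  "mmse_gain M f g t = L2_norm_sq M f - t * (cmod (L2_inner M f g))\<^sup>2 / (1 + t * L2_norm_sq M g)"

lemma mmse_gain_pos:
  assumes f: "square_integrable M f" and g: "square_integrable M g"
    and f_pos: "0 < L2_norm_sq M f" and t: "0 \<le> t"
  shows "0 < mmse_gain M f g t"
proof -
  have d: "0 < 1 + t * L2_norm_sq M g"
    using t L2_norm_sq_nonneg[of M g] by (simp add: add_pos_nonneg)
  have "t * (cmod (L2_inner M f g))\<^sup>2 / (1 + t * L2_norm_sq M g)
      \<le> t * (L2_norm_sq M f * L2_norm_sq M g) / (1 + t * L2_norm_sq M g)"
    using L2_inner_Cauchy_Schwarz[OF f g] t d by (intro divide_right_mono mult_left_mono) auto
  also have "\<dots> < L2_norm_sq M f"
    using d f_pos by (simp add: field_simps)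
  finally show ?thesis
    unfolding mmse_gain_def by simp
qed

lemma mmse_gain_eq_L2_corr_sq:
  assumes "0 < L2_norm_sq M f" and "0 < L2_norm_sq M g" and "0 \<le> t"
  shows "mmse_gain M f g t
    = L2_norm_sq M f * (1 - t * L2_norm_sq M g * L2_corr_sq M f g / (1 + t * L2_norm_sq M g))"
proof -
  define d where "d = 1 + t * L2_norm_sq M g"
  have "0 < d"
    unfolding d_def using assms by (simp add: add_pos_nonneg)
  then show ?thesis
    unfolding mmse_gain_def L2_corr_sq_def d_def[symmetric] using assms by (simp add: field_simps)
qed

text \<open>By Sherman-Morrison, v is (I + t g g^*)^-1 f.\<close>

lemma L2_rank_one_resolvent:
  assumes f: "square_integrable M f" and g: "square_integrable M g" and t: "0 \<le> t"
  defines "v \<equiv> \<lambda>x. f x + (- of_real (t / (1 + t * L2_norm_sq M g)) * L2_inner M f g) * g x"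
  shows "square_integrable M v"
    and "\<And>w. square_integrable M w
      \<Longrightarrow> L2_inner M v w + of_real t * L2_inner M v g * L2_inner M g w = L2_inner M f w"
    and "L2_norm_sq M v + t * (cmod (L2_inner M v g))\<^sup>2 = mmse_gain M f g t"
proof -
  define d where "d = 1 + t * L2_norm_sq M g"
  define c where "c = L2_inner M f g"
  have v_eq: "v = (\<lambda>x. f x + (- of_real (t / d) * c) * g x)"
    unfolding v_def d_def c_def ..
  have d: "0 < d"
    unfolding d_def using t L2_norm_sq_nonneg[of M g] by (simp add: add_pos_nonneg)
  show v: "square_integrable M v"
    unfolding v_eq using f g by (intro square_integrable_add square_integrable_scale)
  have "L2_inner M v g = c - of_real (t / d) * c * of_real (L2_norm_sq M g)"
    unfolding v_eq L2_inner_add_scaled_left[OF f g g] L2_inner_self c_def by simp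
  also have "\<dots> = c / of_real d"
  proof -
    have "(of_real d :: complex) \<noteq> 0"
      using d by simp
    then show ?thesis
      unfolding d_def by (simp add: field_simps)
  qed
  finally have vg: "L2_inner M v g = c / of_real d" .
  show reproduce: "L2_inner M v w + of_real t * L2_inner M v g * L2_inner M g w = L2_inner M f w"
    if w: "square_integrable M w" for w
  proof -
    have "L2_inner M v w = L2_inner M f w - of_real (t / d) * c * L2_inner M g w"
      unfolding v_eq L2_inner_add_scaled_left[OF f g w] by simp
    then show ?thesis
      using d unfolding vg by (simp add: field_simps)
  qed
  have "of_real (L2_norm_sq M v + t * (cmod (L2_inner M v g))\<^sup>2)
      = L2_inner M v v + of_real t * L2_inner M v g * L2_inner M g v"
    by (simp add: L2_inner_self L2_inner_commute[of M g v] complex_norm_square[unfolded of_real_power] mult.assoc)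
  also have "\<dots> = L2_inner M f v"
    by (rule reproduce[OF v])
  also have "\<dots> = of_real (L2_norm_sq M f) - of_real (t / d) * (cnj c * c)"
    unfolding v_eq L2_inner_add_scaled_right[OF f g f] L2_inner_self c_def by simp
  also have "\<dots> = of_real (mmse_gain M f g t)"
    unfolding mmse_gain_def c_def[symmetric] d_def[symmetric]
    by (simp only: complex_norm_square[symmetric] mult.commute[of "cnj c"] of_real_diff of_real_mult
        flip: times_divide_eq_left times_divide_eq_right)
  finally show "L2_norm_sq M v + t * (cmod (L2_inner M v g))\<^sup>2 = mmse_gain M f g t"
    by (simp only: of_real_eq_iff)
qed

lemma L2_inner_mmse_Cauchy_Schwarz:
  assumes f: "square_integrable M f" and g: "square_integrable M g"
    and e: "square_integrable M e" and t: "0 \<le> t"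
  shows "(cmod (L2_inner M f e))\<^sup>2 \<le> (L2_norm_sq M e + t * (cmod (L2_inner M g e))\<^sup>2) * mmse_gain M f g t"
  using L2_inner_rank_one_Cauchy_Schwarz[OF L2_rank_one_resolvent(1)[OF f g t] e g t]
  unfolding L2_rank_one_resolvent(2)[OF f g t e] L2_rank_one_resolvent(3)[OF f g t]
  by (simp add: mult.commute)

lemma div_mmse_gain_le:
  assumes f: "square_integrable M f" and g: "square_integrable M g"
    and e: "square_integrable M e" and t: "0 \<le> t"
  shows "(cmod (L2_inner M f e))\<^sup>2 / mmse_gain M f g t \<le> L2_norm_sq M e + t * (cmod (L2_inner M g e))\<^sup>2"
proof (cases "0 < mmse_gain M f g t")
  case True
  then show ?thesis
    using L2_inner_mmse_Cauchy_Schwarz[OF f g e t] by (simp add: pos_divide_le_eq mult.commute)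
next
  case False
  then have "(cmod (L2_inner M f e))\<^sup>2 / mmse_gain M f g t \<le> 0"
    by (simp add: divide_nonneg_nonpos)
  moreover have "0 \<le> L2_norm_sq M e + t * (cmod (L2_inner M g e))\<^sup>2"
    using t by (simp add: L2_norm_sq_nonneg)
  ultimately show ?thesis
    by linarith
qed

lemma dual_powers_le:
  assumes f: "square_integrable M f" and g: "square_integrable M g"
    and e1: "square_integrable M e1" and e2: "square_integrable M e2"
    and P2_def: "P2 = (cmod (L2_inner M g e2))\<^sup>2 / (L2_norm_sq M g * (1 + (cmod (L2_inner M g e1))\<^sup>2))"
    and P1_def: "P1 = (cmod (L2_inner M f e1))\<^sup>2 / mmse_gain M f g P2"
  shows "P1 + P2 \<le> L2_norm_sq M e1 + L2_norm_sq M e2"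
proof -
  have P2: "0 \<le> P2"
    unfolding P2_def by (simp add: L2_norm_sq_nonneg)
  have "P2 * (1 + (cmod (L2_inner M g e1))\<^sup>2) \<le> L2_norm_sq M e2"
  proof (cases "L2_norm_sq M g = 0")
    case True
    then show ?thesis
      unfolding P2_def by (simp add: L2_norm_sq_nonneg)
  next
    case False
    moreover have "1 + (cmod (L2_inner M g e1))\<^sup>2 \<noteq> 0"
      using zero_le_power2[of "cmod (L2_inner M g e1)"] by linarith
    ultimately have "P2 * (1 + (cmod (L2_inner M g e1))\<^sup>2) = (cmod (L2_inner M g e2))\<^sup>2 / L2_norm_sq M g"
      unfolding P2_def by simp
    also have "\<dots> \<le> L2_norm_sq M e2"
      using False L2_inner_Cauchy_Schwarz[OF g e2] L2_norm_sq_nonneg[of M g]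
      by (simp add: divide_le_eq mult.commute)
    finally show ?thesis .
  qed
  with div_mmse_gain_le[OF f g e1 P2] show ?thesis
    unfolding P1_def[symmetric] by (simp add: algebra_simps)
qed

lemma dual_sum_rate_eq:
  assumes f: "square_integrable M f" and g: "square_integrable M g"
    and f_pos: "0 < L2_norm_sq M f" and g_pos: "0 < L2_norm_sq M g"
    and P2_def: "P2 = (cmod (L2_inner M g e2))\<^sup>2 / (L2_norm_sq M g * (1 + (cmod (L2_inner M g e1))\<^sup>2))"
    and P1_def: "P1 = (cmod (L2_inner M f e1))\<^sup>2 / mmse_gain M f g P2"
  shows "log 2 (1 + P1 * L2_norm_sq M f
            * (1 - P2 * L2_norm_sq M g * L2_corr_sq M f g / (1 + P2 * L2_norm_sq M g)))
         + log 2 (1 + P2 * L2_norm_sq M g)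
       = log 2 (1 + (cmod (L2_inner M f e1))\<^sup>2)
         + log 2 (1 + (cmod (L2_inner M g e2))\<^sup>2 / (1 + (cmod (L2_inner M g e1))\<^sup>2))"
proof -
  have P2: "0 \<le> P2"
    unfolding P2_def by (simp add: L2_norm_sq_nonneg)
  have "P1 * L2_norm_sq M f * (1 - P2 * L2_norm_sq M g * L2_corr_sq M f g / (1 + P2 * L2_norm_sq M g))
      = P1 * mmse_gain M f g P2" (is "?uplink1 = _")
    using mmse_gain_eq_L2_corr_sq[OF f_pos g_pos P2] by simp
  also have "\<dots> = (cmod (L2_inner M f e1))\<^sup>2"
    unfolding P1_def using mmse_gain_pos[OF f g f_pos P2] by simp
  finally have "?uplink1 = (cmod (L2_inner M f e1))\<^sup>2" .
  moreover have "1 + (cmod (L2_inner M g e1))\<^sup>2 \<noteq> 0"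
    using zero_le_power2[of "cmod (L2_inner M g e1)"] by linarith
  then have "P2 * L2_norm_sq M g = (cmod (L2_inner M g e2))\<^sup>2 / (1 + (cmod (L2_inner M g e1))\<^sup>2)"
    unfolding P2_def using g_pos by simp
  ultimately show ?thesis
    by simp
qed

lemma square_integrable_restrict_space_iff:
  "A \<in> sets lborel \<Longrightarrow> square_integrable (restrict_space lborel A) u \<longleftrightarrow> L2_on A u"
  unfolding square_integrable_def L2_on_def set_integrable_def
  by (simp add: borel_measurable_restrict_space_iff integrable_restrict_space)

lemma nrm2_eq_L2_norm_sq_restrict_space:
  "A \<in> sets lborel \<Longrightarrow> nrm2 A u = L2_norm_sq (restrict_space lborel A) u"
  unfolding nrm2_def L2_norm_sq_def set_lebesgue_integral_def by (simp add: integral_restrict_space)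

lemma aint_mult_eq_L2_inner:
  "A \<in> sets lborel \<Longrightarrow> aint A (\<lambda>r. u r * w r) = L2_inner (restrict_space lborel A) u (\<lambda>r. cnj (w r))"
  unfolding aint_def L2_inner_def set_lebesgue_integral_def by (simp add: integral_restrict_space)

lemma aint_cnj_mult_eq_L2_inner:
  "A \<in> sets lborel \<Longrightarrow> aint A (\<lambda>r. cnj (u r) * w r) = L2_inner (restrict_space lborel A) w u"
  unfolding aint_def L2_inner_def set_lebesgue_integral_def by (simp add: integral_restrict_space mult.commute)

theorem theorem4:
  fixes A :: "(real^3) set"
    and k0 \<eta> Au1 Au2 \<sigma>1 \<sigma>2 P :: real
    and G1 G2 J1 J2 H1 H2 Hh1 Hh2 :: "real^3 \<Rightarrow> complex"
    and g1 g2 P1 P2 gb1 gb2 :: real and \<rho> :: complex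
  assumes A_meas: "A \<in> sets lborel"
    and A_pos: "0 < emeasure lborel A" and A_fin: "emeasure lborel A < \<infinity>"
    and k0_pos: "0 < k0" and eta_pos: "0 < \<eta>"
    and G1_L2: "L2_on A G1" and G2_L2: "L2_on A G2"
    and g1_pos: "0 < nrm2 A G1" and g2_pos: "0 < nrm2 A G2"
    and Au1_pos: "0 < Au1" and Au2_pos: "0 < Au2"
    and s1_pos: "0 < \<sigma>1" and s2_pos: "0 < \<sigma>2"
    and P_pos: "0 < P"
    and J1_L2: "L2_on A J1" and J2_L2: "L2_on A J2"
    and power: "nrm2 A J1 + nrm2 A J2 \<le> P"
    and g1_def: "g1 = nrm2 A G1" and g2_def: "g2 = nrm2 A G2"
    and H1_def: "H1 = (\<lambda>r. (\<i> * complex_of_real (k0 * \<eta> / sqrt (4 * pi))) * G1 r)"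
    and H2_def: "H2 = (\<lambda>r. (\<i> * complex_of_real (k0 * \<eta> / sqrt (4 * pi))) * G2 r)"
    and Hh1_def: "Hh1 = (\<lambda>r. complex_of_real (sqrt Au1 / \<sigma>1) * H1 r)"
    and Hh2_def: "Hh2 = (\<lambda>r. complex_of_real (sqrt Au2 / \<sigma>2) * H2 r)"
    and rho_def: "\<rho> = aint A (\<lambda>r. cnj (G1 r) * G2 r) / complex_of_real (sqrt (g1 * g2))"
    and P2_def: "P2 = (cmod (aint A (\<lambda>r. Hh2 r * J2 r)))^2 /
              (nrm2 A Hh2 * (1 + (cmod (aint A (\<lambda>r. Hh2 r * J1 r)))^2))"
    and P1_def: "P1 = (cmod (aint A (\<lambda>r. Hh1 r * J1 r)))^2 /
              (nrm2 A Hh1 - P2 * (cmod (aint A (\<lambda>r. cnj (Hh1 r) * Hh2 r)))^2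
                               / (1 + P2 * nrm2 A Hh2))"
    and gb1_def: "gb1 = Au1 * k0^2 * \<eta>^2 / (4 * pi * \<sigma>1^2) * P1"
    and gb2_def: "gb2 = Au2 * k0^2 * \<eta>^2 / (4 * pi * \<sigma>2^2) * P2"
  shows "log 2 (1 + gb1 * g1 * (1 - gb2 * g2 * (cmod \<rho>)^2 / (1 + gb2 * g2)))
           + log 2 (1 + gb2 * g2)
         = log 2 (1 + (cmod (aint A (\<lambda>r. Hh1 r * J1 r)))^2)
           + log 2 (1 + (cmod (aint A (\<lambda>r. Hh2 r * J2 r)))^2
                        / (1 + (cmod (aint A (\<lambda>r. Hh2 r * J1 r)))^2))
       \<and> P1 + P2 \<le> nrm2 A J1 + nrm2 A J2
       \<and> nrm2 A J1 + nrm2 A J2 \<le> P"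
proof -
  define M where "M = restrict_space lborel A"
  have L2: "square_integrable M G1" "square_integrable M G2"
      "square_integrable M (\<lambda>r. cnj (J1 r))" "square_integrable M (\<lambda>r. cnj (J2 r))"
    unfolding M_def using G1_L2 G2_L2 J1_L2 J2_L2 A_meas
    by (simp_all add: square_integrable_restrict_space_iff square_integrable_cnj)
  have L2_Hh: "square_integrable M Hh1" "square_integrable M Hh2"
    unfolding Hh1_def Hh2_def H1_def H2_def by (intro square_integrable_scale L2(1,2))+
  have nrm: "\<And>u. nrm2 A u = L2_norm_sq M u"
    unfolding M_def using A_meas by (rule nrm2_eq_L2_norm_sq_restrict_space)
  note inner = aint_cnj_mult_eq_L2_inner[OF A_meas, folded M_def]
    aint_mult_eq_L2_inner[OF A_meas, folded M_def]
  have gains: "gb1 * g1 = P1 * L2_norm_sq M Hh1" "gb2 * g2 = P2 * L2_norm_sq M Hh2"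
    unfolding gb1_def gb2_def g1_def g2_def nrm Hh1_def Hh2_def H1_def H2_def L2_norm_sq_scale
      norm_mult norm_of_real norm_ii
    using Au1_pos Au2_pos by (simp_all add: power_mult_distrib power_divide mult_ac)
  have pos: "0 < L2_norm_sq M Hh1" "0 < L2_norm_sq M Hh2"
    using g1_pos g2_pos Au1_pos Au2_pos s1_pos s2_pos k0_pos eta_pos
    unfolding nrm Hh1_def Hh2_def H1_def H2_def L2_norm_sq_scale by simp_all
  have "L2_corr_sq M Hh1 Hh2 = L2_corr_sq M H1 H2"
    unfolding Hh1_def Hh2_def using Au1_pos Au2_pos s1_pos s2_pos by (intro L2_corr_sq_scale) simp_all
  also have "\<dots> = (cmod \<rho>)\<^sup>2"
    unfolding H1_def H2_def rho_def g1_def g2_def nrm inner using k0_pos eta_pos g1_pos g2_pos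
    by (subst L2_corr_sq_scale) (simp_all add: L2_corr_sq_def norm_divide power_divide cmod_L2_inner_commute nrm)
  finally have rho: "(cmod \<rho>)\<^sup>2 = L2_corr_sq M Hh1 Hh2" ..
  have P2': "P2 = (cmod (L2_inner M Hh2 (\<lambda>r. cnj (J2 r))))\<^sup>2
      / (L2_norm_sq M Hh2 * (1 + (cmod (L2_inner M Hh2 (\<lambda>r. cnj (J1 r))))\<^sup>2))"
    unfolding P2_def nrm inner ..
  have P1': "P1 = (cmod (L2_inner M Hh1 (\<lambda>r. cnj (J1 r))))\<^sup>2 / mmse_gain M Hh1 Hh2 P2"
    unfolding P1_def nrm inner mmse_gain_def cmod_L2_inner_commute[of M Hh2] ..
  show ?thesis
    using dual_sum_rate_eq[OF L2_Hh pos P2' P1'] dual_powers_le[OF L2_Hh L2(3,4) P2' P1'] power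
    unfolding gains rho inner nrm L2_norm_sq_cnj by simp
qed

end
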